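(* Let $(V,\{A,B\})$ be a forking problem with $n$ agents and a monotonic profile. Suppose there exist $k_1,k_2\in\{1,\dots,n\}$ with $k_1\le|V_A^*|$ and $k_2\le|V_B^*|$ such that every agent in $V_A^*$ is $k_1$-loyal (to $A$) and every agent in $V_B^*$ is $k_2$-loyal (to $B$). Then the profile admits a unique stable assignment.
   Context: Agents $V=\{v_1,\dots,v_n\}$; two alternatives $A,B$. Each agent $v_i$ has a strict total order $\succ_i$ on $\{A,B\}\times\{1,\dots,n\}$, where $(S,j)$ means being in the community adopting $S$ of size $j$; it is monotonic if $(S,j)\succ_i(S,k)$ whenever $k<j$. For $S\in\{A,B\}$ with $S'$ the other alternative, $V_S^*$ is the set of agents with $(S,n)\succ_i(S',n)$. Agent $v_i$ is $k$-loyal to $S$ if $v_i\in V_S^*$ and $(S,k)\succ_i(S',n)$. An assignment is a map $f:V\to\{A,B\}$; $v_i$ prefers $f$ to $g$ if $(f(v_i),|f^{-1}(f(v_i))|)\succ_i(g(v_i),|g^{-1}(g(v_i))|)$. An assignment $f$ is stable if there is no assignment $f'\neq f$ such that every agent $v_i$ with $f'(v_i)\neq f(v_i)$ prefers $f'$ to $f$. *)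

theory Defs
  imports Main
begin

datatype alt = A | B

fun other :: "alt \<Rightarrow> alt" where
  "other A = B" | "other B = A"

text \<open>A preference profile: for agent v, pref v x y means x is strictly preferred to y
  by v, where x, y range over {A,B} x {1..n}.\<close>

definition outcomes :: "nat \<Rightarrow> (alt \<times> nat) set" where
  "outcomes n = UNIV \<times> {1..n}"

definition strict_total_on :: "'a set \<Rightarrow> ('a \<Rightarrow> 'a \<Rightarrow> bool) \<Rightarrow> bool" where
  "strict_total_on D r \<longleftrightarrow>
     (\<forall>x\<in>D. \<not> r x x) \<and>
     (\<forall>x\<in>D. \<forall>y\<in>D. \<forall>z\<in>D. r x y \<longrightarrow> r y z \<longrightarrow> r x z) \<and>
     (\<forall>x\<in>D. \<forall>y\<in>D. x \<noteq> y \<longrightarrow> r x y \<or> r y x)"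

definition profile :: "'v set \<Rightarrow> ('v \<Rightarrow> alt \<times> nat \<Rightarrow> alt \<times> nat \<Rightarrow> bool) \<Rightarrow> bool" where
  "profile V pref \<longleftrightarrow> (\<forall>v\<in>V. strict_total_on (outcomes (card V)) (pref v))"

definition monotonic :: "'v set \<Rightarrow> ('v \<Rightarrow> alt \<times> nat \<Rightarrow> alt \<times> nat \<Rightarrow> bool) \<Rightarrow> bool" where
  "monotonic V pref \<longleftrightarrow>
     (\<forall>v\<in>V. \<forall>S. \<forall>j\<in>{1..card V}. \<forall>k\<in>{1..card V}. k < j \<longrightarrow> pref v (S, j) (S, k))"

definition Vstar :: "'v set \<Rightarrow> ('v \<Rightarrow> alt \<times> nat \<Rightarrow> alt \<times> nat \<Rightarrow> bool) \<Rightarrow> alt \<Rightarrow> 'v set" where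
  "Vstar V pref S = {v\<in>V. pref v (S, card V) (other S, card V)}"

definition loyal :: "'v set \<Rightarrow> ('v \<Rightarrow> alt \<times> nat \<Rightarrow> alt \<times> nat \<Rightarrow> bool) \<Rightarrow> nat \<Rightarrow> alt \<Rightarrow> 'v \<Rightarrow> bool" where
  "loyal V pref k S v \<longleftrightarrow> v \<in> Vstar V pref S \<and> pref v (S, k) (other S, card V)"

text \<open>Assignments V -> {A,B}, canonically represented (fixed value outside V).\<close>
definition assignment :: "'v set \<Rightarrow> ('v \<Rightarrow> alt) \<Rightarrow> bool" where
  "assignment V f \<longleftrightarrow> (\<forall>v. v \<notin> V \<longrightarrow> f v = undefined)"

definition outcome :: "'v set \<Rightarrow> ('v \<Rightarrow> alt) \<Rightarrow> 'v \<Rightarrow> alt \<times> nat" where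
  "outcome V f v = (f v, card {u\<in>V. f u = f v})"

definition prefers :: "'v set \<Rightarrow> ('v \<Rightarrow> alt \<times> nat \<Rightarrow> alt \<times> nat \<Rightarrow> bool) \<Rightarrow> 'v \<Rightarrow> ('v \<Rightarrow> alt) \<Rightarrow> ('v \<Rightarrow> alt) \<Rightarrow> bool" where
  "prefers V pref v f g \<longleftrightarrow> pref v (outcome V f v) (outcome V g v)"

definition stable :: "'v set \<Rightarrow> ('v \<Rightarrow> alt \<times> nat \<Rightarrow> alt \<times> nat \<Rightarrow> bool) \<Rightarrow> ('v \<Rightarrow> alt) \<Rightarrow> bool" where
  "stable V pref f \<longleftrightarrow> assignment V f \<and>
     \<not> (\<exists>f'. assignment V f' \<and> f' \<noteq> f \<and>
            (\<forall>v\<in>V. f' v \<noteq> f v \<longrightarrow> prefers V pref v f' f))"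

end

theory Submission
  imports Defs
begin

text \<open>Let every agent join the alternative it ranks first among the two grand
  coalitions, so that the community of \<open>S\<close> is exactly \<open>V\<^sub>S\<^sup>*\<close>. Its size is at least \<open>k\<^sub>S\<close>, so by
  loyalty and monotonicity each agent strictly prefers its place in this assignment to every
  outcome with the other alternative. Hence no agent gains by deviating, so the assignment is
  stable, and it blocks every other assignment, so no other assignment is stable.\<close>

lemma other_iff_neq: "x = other S \<longleftrightarrow> x \<noteq> S"
  by (cases x; cases S) simp_all

lemma strict_total_on_asym:
  assumes "strict_total_on D r" "x \<in> D" "y \<in> D" "r x y"
  shows "\<not> r y x"
  using assms unfolding strict_total_on_def by blast

lemma outcome_in_outcomes:
  assumes "finite V" "v \<in> V"
  shows "outcome V f v \<in> outcomes (card V)"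
proof -
  have "v \<in> {u \<in> V. f u = f v}" using assms(2) by simp
  then have "0 < card {u \<in> V. f u = f v}" using assms(1) card_gt_0_iff by fastforce
  moreover have "card {u \<in> V. f u = f v} \<le> card V" using assms(1) by (intro card_mono) auto
  ultimately show ?thesis unfolding outcome_def outcomes_def by simp
qed

lemma prefers_asym:
  assumes "finite V" "profile V pref" "v \<in> V" "prefers V pref v f g"
  shows "\<not> prefers V pref v g f"
  using assms strict_total_on_asym outcome_in_outcomes
  unfolding prefers_def profile_def by metis

definition dominant :: "'v set \<Rightarrow> ('v \<Rightarrow> alt \<times> nat \<Rightarrow> alt \<times> nat \<Rightarrow> bool) \<Rightarrow> ('v \<Rightarrow> alt) \<Rightarrow> bool"
  where "dominant V pref F \<longleftrightarrow> assignment V F \<and>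
    (\<forall>v\<in>V. \<forall>g. g v \<noteq> F v \<longrightarrow> prefers V pref v F g)"

lemma dominant_stable:
  assumes "finite V" "profile V pref" "dominant V pref F"
  shows "stable V pref F"
  unfolding stable_def
proof (intro conjI notI)
  show "assignment V F" using assms(3) unfolding dominant_def by simp
  assume "\<exists>f'. assignment V f' \<and> f' \<noteq> F \<and> (\<forall>v\<in>V. f' v \<noteq> F v \<longrightarrow> prefers V pref v f' F)"
  then obtain g v where g: "assignment V g" "\<forall>v\<in>V. g v \<noteq> F v \<longrightarrow> prefers V pref v g F"
    and "g v \<noteq> F v" by blast
  with \<open>assignment V F\<close> have "v \<in> V" unfolding assignment_def by metis
  with g(2) \<open>g v \<noteq> F v\<close> assms show False
    using prefers_asym unfolding dominant_def by metis
qed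

lemma stable_eq_dominant:
  assumes "dominant V pref F" "stable V pref f"
  shows "f = F"
  using assms unfolding stable_def dominant_def by metis

lemma dominant_imp_unique_stable:
  assumes "finite V" "profile V pref" "dominant V pref F"
  shows "\<exists>!f. stable V pref f"
  using assms dominant_stable stable_eq_dominant by metis

lemma Vstar_other_iff:
  assumes "profile V pref" "0 < card V" "v \<in> V"
  shows "v \<in> Vstar V pref (other S) \<longleftrightarrow> v \<notin> Vstar V pref S"
proof -
  have total: "strict_total_on (outcomes (card V)) (pref v)"
    using assms(1,3) unfolding profile_def by simp
  have out: "(S, card V) \<in> outcomes (card V)" "(other S, card V) \<in> outcomes (card V)"
    using assms(2) unfolding outcomes_def by auto
  have "other S \<noteq> S" "other (other S) = S" by (cases S; simp)+
  then have "pref v (other S, card V) (S, card V) \<longleftrightarrow> \<not> pref v (S, card V) (other S, card V)"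
    using total out strict_total_on_asym unfolding strict_total_on_def by blast
  then show ?thesis using assms(3) \<open>other (other S) = S\<close> unfolding Vstar_def by simp
qed

text \<open>\<open>(S,a) \<succeq> (S,k) \<succ> (S',n) \<succeq> (S',m)\<close> by monotonicity, loyalty and monotonicity.\<close>

lemma loyal_pref_other:
  assumes "profile V pref" "monotonic V pref" "loyal V pref k S v"
    and "1 \<le> k" "k \<le> a" "a \<le> card V" "m \<in> {1..card V}"
  shows "pref v (S, a) (other S, m)"
proof -
  have v: "v \<in> V" using assms(3) unfolding loyal_def Vstar_def by simp
  have trans: "\<And>x y z. \<lbrakk>x \<in> outcomes (card V); y \<in> outcomes (card V); z \<in> outcomes (card V);
      pref v x y; pref v y z\<rbrakk> \<Longrightarrow> pref v x z"
    using assms(1) v unfolding profile_def strict_total_on_def by blast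
  have mono: "\<And>T i j. \<lbrakk>i \<in> {1..card V}; j \<in> {1..card V}; i < j\<rbrakk> \<Longrightarrow> pref v (T, j) (T, i)"
    using assms(2) v unfolding monotonic_def by blast
  have out: "(S, a) \<in> outcomes (card V)" "(S, k) \<in> outcomes (card V)"
    "(other S, card V) \<in> outcomes (card V)" "(other S, m) \<in> outcomes (card V)"
    using assms(4-7) unfolding outcomes_def by auto
  have "pref v (S, k) (other S, card V)" using assms(3) unfolding loyal_def by simp
  then have "pref v (S, a) (other S, card V)"
    using assms(4-6) mono[of k a S] trans[OF out(1-3)] by (cases "a = k") auto
  then show ?thesis
    using assms(7) mono[of m "card V" "other S"] trans[OF out(1,3,4)] by (cases "m = card V") auto
qed

definition sincere :: "'v set \<Rightarrow> ('v \<Rightarrow> alt \<times> nat \<Rightarrow> alt \<times> nat \<Rightarrow> bool) \<Rightarrow> 'v \<Rightarrow> alt"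
  where "sincere V pref v =
    (if v \<in> V then if v \<in> Vstar V pref A then A else B else undefined)"

lemma sincere_iff_Vstar:
  assumes "profile V pref" "0 < card V" "v \<in> V"
  shows "sincere V pref v = S \<longleftrightarrow> v \<in> Vstar V pref S"
  using Vstar_other_iff[OF assms, of A] assms(3)
  by (cases S) (auto simp: sincere_def)

lemma sincere_dominant:
  assumes "finite V" "profile V pref" "monotonic V pref"
    and loyal: "\<And>S. \<exists>k \<ge> 1. k \<le> card (Vstar V pref S) \<and> (\<forall>v\<in>Vstar V pref S. loyal V pref k S v)"
  shows "dominant V pref (sincere V pref)"
  unfolding dominant_def
proof (intro conjI ballI allI impI)
  show "assignment V (sincere V pref)" unfolding assignment_def sincere_def by simp
  fix v g
  assume v: "v \<in> V" and "g v \<noteq> sincere V pref v"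
  define S where "S = sincere V pref v"
  obtain k where k: "1 \<le> k" "k \<le> card (Vstar V pref S)" "\<forall>u\<in>Vstar V pref S. loyal V pref k S u"
    using loyal by blast
  have card_Vstar: "card (Vstar V pref S) \<le> card V"
    using assms(1) by (intro card_mono) (auto simp: Vstar_def)
  with k have n: "0 < card V" by linarith
  have community: "{u \<in> V. sincere V pref u = S} = Vstar V pref S"
    using sincere_iff_Vstar[OF assms(2) n] by (auto simp: Vstar_def)
  have "v \<in> Vstar V pref S" using sincere_iff_Vstar[OF assms(2) n v] S_def by blast
  moreover have "g v = other S" using \<open>g v \<noteq> sincere V pref v\<close> other_iff_neq S_def by metis
  moreover have "card {u \<in> V. g u = g v} \<in> {1..card V}"
    using outcome_in_outcomes[OF assms(1) v, of g] unfolding outcome_def outcomes_def by simp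
  ultimately show "prefers V pref v (sincere V pref) g"
    using loyal_pref_other[OF assms(2,3) _ k(1,2) card_Vstar] k(3) community S_def
    unfolding prefers_def outcome_def by simp
qed

theorem proposition1:
  fixes V :: "'v set" and pref :: "'v \<Rightarrow> alt \<times> nat \<Rightarrow> alt \<times> nat \<Rightarrow> bool"
    and k1 k2 :: nat
  assumes "finite V"
    and "profile V pref"
    and "monotonic V pref"
    and "k1 \<in> {1..card V}" and "k2 \<in> {1..card V}"
    and "k1 \<le> card (Vstar V pref A)" and "k2 \<le> card (Vstar V pref B)"
    and "\<forall>v\<in>Vstar V pref A. loyal V pref k1 A v"
    and "\<forall>v\<in>Vstar V pref B. loyal V pref k2 B v"
  shows "\<exists>!f. stable V pref f"
proof -
  have "\<exists>k \<ge> 1. k \<le> card (Vstar V pref S) \<and> (\<forall>v\<in>Vstar V pref S. loyal V pref k S v)" for S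
    using assms(4-9) by (cases S) auto
  then have "dominant V pref (sincere V pref)"
    using sincere_dominant[OF assms(1-3)] by blast
  then show ?thesis using dominant_imp_unique_stable[OF assms(1,2)] by blast
qed

end
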